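(* Let $\beta\in(0,\infty)^d$ and $\gamma_2=\min_i\big(-\beta(i)\log\rho_i\big)$. For $\epsilon,\delta>0$ define $W_l(x)=2\gamma_2-\alpha_l\epsilon+\langle q_l,x\rangle$ for $l=1,\dots,L$ and $W^{\epsilon,\delta}(x)=-\delta\log\sum_{l=1}^L\exp(-W_l(x)/\delta)$. Then $W^{\epsilon,\delta}(x)\le 0$ for all $x\in\mathcal{S}_2=\{x\in\mathbb{R}^d_+: x(i)=\beta(i)\text{ for some }i\text{ and }x(j)\le\beta(j)\text{ for all }j\}$.
   Context: Jackson network with a tree topology on nodes $\{1,\dots,d\}$, root node $1$; $i\to j$ means node $j$ is a child of node $i$. Customers arrive from outside only at node $1$, with rate $\lambda>0$. For $i\to j$, $\mu_{i,j}>0$ is the rate at which node $i$ serves customers and sends them to node $j$; $\mu_{i,0}\ge 0$ is the rate at which node $i$ serves customers who then leave the system. Let $\mu_i=\sum_{k:i\to k}\mu_{i,k}+\mu_{i,0}>0$. Arrival rates: $\Lambda_1=\lambda$ and $\Lambda_j=\Lambda_i\mu_{i,j}/\mu_i$ if $i\to j$. Utilities $\rho_i=\Lambda_i/\mu_i$, assumed to satisfy $\max_i\rho_i<1$; also $\lambda+\sum_i\mu_i=1$. Let $\mu'_{i,0}=\Lambda_i\mu_{i,0}/\mu_i$. Bitmaps $b\in\{0,1\}^d$ ($b(i)=1$: node $i$ nonempty, $b(i)=0$: empty). Effective rates: $M_i(b)=\mu_i$ if $b(i)=1$, $M_i(b)=\min(\mu_i,\sum_{k:i\to k}M_k(b)+\mu'_{i,0})$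 if $b(i)=0$; effective gradient of $b$: $q(i)=2\log(\Lambda_i/M_i(b))$. Simple rates: $m_i(b)=\mu_i$ if $b(i)=1$, $m_i(b)=\sum_{k:i\to k}m_k(b)+\mu'_{i,0}$ if $b(i)=0$; simple gradient of $b$: $q(i)=2\log(\Lambda_i/m_i(b))$. Let $q_1,\dots,q_L$ be the distinct effective gradients over all bitmaps. Each $q_l$ is the simple gradient of some bitmap $\bar b_l$; define $\alpha_l=1+\#\{i:\bar b_l(i)=0\}$. *)

theory Defs
  imports Complex_Main
begin

text \<open>Nodes are 1..d; E i j means i -> j (j is a child of i).
  mu i j is the rate mu_{i,j} for a child j, and mu i 0 is the exit rate mu_{i,0}.
  Bitmaps are b :: nat => bool (True = nonempty); only values on 1..d matter.\<close>

definition is_rooted_tree :: "nat \<Rightarrow> (nat \<Rightarrow> nat \<Rightarrow> bool) \<Rightarrow> bool" where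
  "is_rooted_tree d E \<longleftrightarrow> 1 \<le> d
     \<and> (\<forall>i j. E i j \<longrightarrow> i \<in> {1..d} \<and> j \<in> {1..d})
     \<and> (\<forall>i. \<not> E i 1)
     \<and> (\<forall>j\<in>{2..d}. \<exists>!i. E i j)
     \<and> (\<forall>j\<in>{1..d}. E\<^sup>*\<^sup>* 1 j)"

definition children :: "nat \<Rightarrow> (nat \<Rightarrow> nat \<Rightarrow> bool) \<Rightarrow> nat \<Rightarrow> nat set" where
  "children d E i = {k \<in> {1..d}. E i k}"

definition mu_tot :: "nat \<Rightarrow> (nat \<Rightarrow> nat \<Rightarrow> bool) \<Rightarrow> (nat \<Rightarrow> nat \<Rightarrow> real) \<Rightarrow> nat \<Rightarrow> real" where
  "mu_tot d E mu i = (\<Sum>k\<in>children d E i. mu i k) + mu i 0"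

definition rho :: "nat \<Rightarrow> (nat \<Rightarrow> nat \<Rightarrow> bool) \<Rightarrow> (nat \<Rightarrow> nat \<Rightarrow> real) \<Rightarrow> (nat \<Rightarrow> real) \<Rightarrow> nat \<Rightarrow> real" where
  "rho d E mu Lam i = Lam i / mu_tot d E mu i"

definition mu0' :: "nat \<Rightarrow> (nat \<Rightarrow> nat \<Rightarrow> bool) \<Rightarrow> (nat \<Rightarrow> nat \<Rightarrow> real) \<Rightarrow> (nat \<Rightarrow> real) \<Rightarrow> nat \<Rightarrow> real" where
  "mu0' d E mu Lam i = Lam i * mu i 0 / mu_tot d E mu i"

text \<open>M is the vector of effective rates of bitmap b (the recursion on the tree
  determines it uniquely).\<close>
definition eff_rates :: "nat \<Rightarrow> (nat \<Rightarrow> nat \<Rightarrow> bool) \<Rightarrow> (nat \<Rightarrow> nat \<Rightarrow> real) \<Rightarrow> (nat \<Rightarrow> real)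
    \<Rightarrow> (nat \<Rightarrow> bool) \<Rightarrow> (nat \<Rightarrow> real) \<Rightarrow> bool" where
  "eff_rates d E mu Lam b M \<longleftrightarrow> (\<forall>i\<in>{1..d}. M i =
     (if b i then mu_tot d E mu i
      else min (mu_tot d E mu i) ((\<Sum>k\<in>children d E i. M k) + mu0' d E mu Lam i)))"

definition simple_rates :: "nat \<Rightarrow> (nat \<Rightarrow> nat \<Rightarrow> bool) \<Rightarrow> (nat \<Rightarrow> nat \<Rightarrow> real) \<Rightarrow> (nat \<Rightarrow> real)
    \<Rightarrow> (nat \<Rightarrow> bool) \<Rightarrow> (nat \<Rightarrow> real) \<Rightarrow> bool" where
  "simple_rates d E mu Lam b m \<longleftrightarrow> (\<forall>i\<in>{1..d}. m i =
     (if b i then mu_tot d E mu i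
      else (\<Sum>k\<in>children d E i. m k) + mu0' d E mu Lam i))"

definition grad :: "nat \<Rightarrow> (nat \<Rightarrow> real) \<Rightarrow> (nat \<Rightarrow> real) \<Rightarrow> (nat \<Rightarrow> real)" where
  "grad d Lam R = (\<lambda>i. if i \<in> {1..d} then 2 * ln (Lam i / R i) else 0)"

definition eff_grads :: "nat \<Rightarrow> (nat \<Rightarrow> nat \<Rightarrow> bool) \<Rightarrow> (nat \<Rightarrow> nat \<Rightarrow> real) \<Rightarrow> (nat \<Rightarrow> real)
    \<Rightarrow> (nat \<Rightarrow> real) set" where
  "eff_grads d E mu Lam = {q. \<exists>b M. eff_rates d E mu Lam b M \<and> q = grad d Lam M}"

definition is_simple_grad :: "nat \<Rightarrow> (nat \<Rightarrow> nat \<Rightarrow> bool) \<Rightarrow> (nat \<Rightarrow> nat \<Rightarrow> real) \<Rightarrow> (nat \<Rightarrow> real)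
    \<Rightarrow> (nat \<Rightarrow> bool) \<Rightarrow> (nat \<Rightarrow> real) \<Rightarrow> bool" where
  "is_simple_grad d E mu Lam b q \<longleftrightarrow> (\<exists>m. simple_rates d E mu Lam b m \<and> q = grad d Lam m)"

definition S2 :: "nat \<Rightarrow> (nat \<Rightarrow> real) \<Rightarrow> (nat \<Rightarrow> real) set" where
  "S2 d beta = {x. (\<forall>j\<in>{1..d}. 0 \<le> x j \<and> x j \<le> beta j) \<and> (\<exists>i\<in>{1..d}. x i = beta i)}"

end

theory Submission
  imports Defs
begin

(* The soft-min W^{eps,delta} is bounded above by each of its arguments W_l, so it
   suffices to exhibit one effective gradient q with W(q) <= 0 on S2.  We take the
   gradient of the all-busy bitmap: its effective rates are the service rates mu_i,
   so q(i) = 2 log rho_i < 0.  For x in S2 with x(i) = beta(i), every term of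
   <q, x> is nonpositive, hence <q, x> <= 2 beta(i) log rho_i <= -2 gamma_2, and
   W(q) = 2 gamma_2 - alpha eps + <q, x> <= -alpha eps < 0.
   The file establishes, in order: positivity of the arrival rates on the tree
   (needed so that the logarithms are meaningful), the all-busy effective gradient,
   the bound for nonpositive linear forms on S2, and the soft-min bound; the main
   theorem then assembles these facts. *)

lemma arrival_rate_pos:
  assumes edges: "\<forall>i j. E i j \<longrightarrow> i \<in> {1..d} \<and> j \<in> {1..d}"
    and lam_pos: "lam > 0"
    and mu_pos: "\<forall>i j. E i j \<longrightarrow> mu i j > 0"
    and mu_tot_pos: "\<forall>i\<in>{1..d}. mu_tot d E mu i > 0"
    and Lam_root: "Lam 1 = lam"
    and Lam_child: "\<forall>i j. E i j \<longrightarrow> Lam j = Lam i * mu i j / mu_tot d E mu i"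
    and reach: "E\<^sup>*\<^sup>* 1 j"
  shows "Lam j > 0"
  using reach
proof (induction rule: rtranclp_induct)
  case base
  then show ?case using Lam_root lam_pos by simp
next
  case (step i j)
  have "mu_tot d E mu i > 0" using edges mu_tot_pos step(2) by blast
  moreover have "mu i j > 0" using mu_pos step(2) by blast
  ultimately show ?case using Lam_child step by simp
qed

lemma log_utility_neg:
  assumes tree: "is_rooted_tree d E"
    and lam_pos: "lam > 0"
    and mu_pos: "\<forall>i j. E i j \<longrightarrow> mu i j > 0"
    and mu_tot_pos: "\<forall>i\<in>{1..d}. mu_tot d E mu i > 0"
    and Lam_root: "Lam 1 = lam"
    and Lam_child: "\<forall>i j. E i j \<longrightarrow> Lam j = Lam i * mu i j / mu_tot d E mu i"
    and stable: "\<forall>i\<in>{1..d}. rho d E mu Lam i < 1"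
    and j: "j \<in> {1..d}"
  shows "ln (rho d E mu Lam j) < 0"
proof -
  have "Lam j > 0"
    using tree j arrival_rate_pos[OF _ lam_pos mu_pos mu_tot_pos Lam_root Lam_child]
    unfolding is_rooted_tree_def by blast
  then show ?thesis using j mu_tot_pos stable unfolding rho_def by simp
qed

lemma all_busy_eff_grad:
  "grad d Lam (mu_tot d E mu) \<in> eff_grads d E mu Lam"
proof -
  have "eff_rates d E mu Lam (\<lambda>_. True) (mu_tot d E mu)"
    unfolding eff_rates_def by simp
  then show ?thesis unfolding eff_grads_def by blast
qed

lemma all_busy_grad_eq:
  assumes "i \<in> {1..d}"
  shows "grad d Lam (mu_tot d E mu) i = 2 * ln (rho d E mu Lam i)"
  using assms unfolding grad_def rho_def by simp

lemma nonpos_linear_form_on_S2: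
  fixes q x beta :: "nat \<Rightarrow> real"
  assumes q_nonpos: "\<forall>j\<in>{1..d}. q j \<le> 0"
    and x_bounds: "\<forall>j\<in>{1..d}. 0 \<le> x j"
    and i: "i \<in> {1..d}" and sat: "x i = beta i"
  shows "(\<Sum>j\<in>{1..d}. q j * x j) \<le> q i * beta i"
proof -
  have "(\<Sum>j\<in>{1..d}. q j * x j) \<le> (\<Sum>j\<in>{1..d}. if j = i then q j * x j else 0)"
  proof (rule sum_mono)
    fix j assume "j \<in> {1..d}"
    then have "q j * x j \<le> 0" using q_nonpos x_bounds by (simp add: mult_nonpos_nonneg)
    then show "q j * x j \<le> (if j = i then q j * x j else 0)" by simp
  qed
  also have "\<dots> = q i * beta i" using i sat by simp
  finally show ?thesis .
qed

lemma soft_min_le_member: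
  fixes W :: "'a \<Rightarrow> real"
  assumes "finite G" and "q0 \<in> G" and "delta > 0"
  shows "- delta * ln (\<Sum>q\<in>G. exp (- W q / delta)) \<le> W q0"
proof -
  have "exp (- W q0 / delta) \<le> (\<Sum>q\<in>G. exp (- W q / delta))"
    by (rule member_le_sum) (use assms(1,2) in auto)
  then have "- W q0 / delta \<le> ln (\<Sum>q\<in>G. exp (- W q / delta))"
    by (metis exp_gt_zero exp_le_cancel_iff exp_ln order_less_le_trans)
  then show ?thesis using assms(3) by (simp add: field_simps)
qed

theorem mainTheorem5:
  fixes d :: nat and E :: "nat \<Rightarrow> nat \<Rightarrow> bool" and lam :: real
    and mu :: "nat \<Rightarrow> nat \<Rightarrow> real" and Lam :: "nat \<Rightarrow> real"
    and bbar :: "(nat \<Rightarrow> real) \<Rightarrow> (nat \<Rightarrow> bool)"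
    and beta x :: "nat \<Rightarrow> real" and eps delta :: real
  assumes tree: "is_rooted_tree d E"
    and lam_pos: "lam > 0"
    and mu_pos: "\<forall>i j. E i j \<longrightarrow> mu i j > 0"
    and mu0_nonneg: "\<forall>i\<in>{1..d}. mu i 0 \<ge> 0"
    and mu_tot_pos: "\<forall>i\<in>{1..d}. mu_tot d E mu i > 0"
    and Lam_root: "Lam 1 = lam"
    and Lam_child: "\<forall>i j. E i j \<longrightarrow> Lam j = Lam i * mu i j / mu_tot d E mu i"
    and stable: "\<forall>i\<in>{1..d}. rho d E mu Lam i < 1"
    and normalized: "lam + (\<Sum>i\<in>{1..d}. mu_tot d E mu i) = 1"
    and bbar: "\<forall>q\<in>eff_grads d E mu Lam. is_simple_grad d E mu Lam (bbar q) q"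
    and beta_pos: "\<forall>i\<in>{1..d}. beta i > 0"
    and eps_pos: "eps > 0" and delta_pos: "delta > 0"
    and x_in: "x \<in> S2 d beta"
  shows "let gamma2 = Min ((\<lambda>i. - beta i * ln (rho d E mu Lam i)) ` {1..d});
             alpha = (\<lambda>q. 1 + real (card {i\<in>{1..d}. \<not> bbar q i}));
             W = (\<lambda>q. 2 * gamma2 - alpha q * eps + (\<Sum>i\<in>{1..d}. q i * x i))
         in - delta * ln (\<Sum>q\<in>eff_grads d E mu Lam. exp (- W q / delta)) \<le> 0"
proof -
  define G where "G = eff_grads d E mu Lam"
  define gamma2 where "gamma2 = Min ((\<lambda>i. - beta i * ln (rho d E mu Lam i)) ` {1..d})"
  define W where "W = (\<lambda>q::nat\<Rightarrow>real. 2 * gamma2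
      - (1 + real (card {i\<in>{1..d}. \<not> bbar q i})) * eps + (\<Sum>i\<in>{1..d}. q i * x i))"
  define q0 where "q0 = grad d Lam (mu_tot d E mu)"
  have log_rho_neg: "\<And>j. j \<in> {1..d} \<Longrightarrow> ln (rho d E mu Lam j) < 0"
    using log_utility_neg[OF tree lam_pos mu_pos mu_tot_pos Lam_root Lam_child stable] .
  obtain i where i: "i \<in> {1..d}" "x i = beta i" and x_nonneg: "\<forall>j\<in>{1..d}. 0 \<le> x j"
    using x_in unfolding S2_def by blast
  have inner: "(\<Sum>j\<in>{1..d}. q0 j * x j) \<le> 2 * ln (rho d E mu Lam i) * beta i"
  proof -
    have "\<forall>j\<in>{1..d}. q0 j \<le> 0"
      using log_rho_neg all_busy_grad_eq unfolding q0_def by (simp add: less_imp_le)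
    then have "(\<Sum>j\<in>{1..d}. q0 j * x j) \<le> q0 i * beta i"
      using nonpos_linear_form_on_S2 x_nonneg i by blast
    then show ?thesis using all_busy_grad_eq[OF i(1)] unfolding q0_def by simp
  qed
  have gamma2_le: "gamma2 \<le> - beta i * ln (rho d E mu Lam i)"
    unfolding gamma2_def using i(1) by (intro Min_le) auto
  have alpha_eps_pos: "(1 + real (card {i\<in>{1..d}. \<not> bbar q0 i})) * eps > 0"
    using eps_pos by simp
  have W_q0: "W q0 \<le> 0"
    unfolding W_def using inner gamma2_le alpha_eps_pos by (simp add: algebra_simps)
  have "- delta * ln (\<Sum>q\<in>G. exp (- W q / delta)) \<le> 0"
  proof (cases "finite G")
    case True
    then show ?thesis using soft_min_le_member[of G q0 delta W] all_busy_eff_grad W_q0 delta_pos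
      unfolding G_def q0_def by fastforce
  qed simp \<comment> \<open>an infinite family sums to 0, and ln 0 = 0\<close>
  then show ?thesis unfolding Let_def G_def W_def gamma2_def by simp
qed

end
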